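(* At any time during the execution of DASH (described in the context) on an initially connected graph, for every surviving node $v$ and every $q\in N(v,G')$, we have $W(T(v,q))\ge \mathrm{rem}(v)$.
   Context: Model: a network is an undirected graph, initially a connected graph $G_0$ on $n$ nodes. In each round an adversary deletes one surviving node $v$ with its incident edges, and then DASH adds edges. $G$ is the current network; $E'$ is the set of healing edges added so far whose endpoints both survive; $G'=(V(G),E')$. $N(u,G)$, $N(u,G')$ are neighbor sets in $G$, $G'$; $\delta(u)=\deg_G(u)-\deg_{G_0}(u)$. DASH: initially every node receives an ID drawn independently and uniformly from $[0,1]$ (its initial ID). When $v$ is deleted (quantities evaluated just before the deletion): partition the nodes of $N(v,G)$ whose current ID differs from that of $v$ into classes of equal current ID; $UN(v,G)$ consists of one node per class, the one with lowest initial ID. Let $S=UN(v,G)\cup N(v,G')$. Order $S$ by increasing $\delta$ and place it in this order into a complete binary tree with $|S|$ positions, filled level by level from the top and left to right; add to the network and to $E'$ the edge between each node of $S$ and the node at its parent position. Then all nodes of the component of $G'$ containing $S$ set their ID to the minimum current ID in $S$. Weights: every node $u$ has weight $w(u)$, initially $1$; when a node $v$ is deleted, $w(v)$ is added to the weight of an arbitrarily chosen node of $N(v,G')$. For a subgraph $H$, $W(H)$ is the sum of the weights of its vertices. For distinct surviving nodes $x,y$, $T(x,y)$ is the connected component of $G'-y$ containing $x$. Define $\mathrm{rem}(v)=\sum_{u\in N(v,G')}W(T(u,v))-\max_{u\in N(v,G')}W(T(u,v))+w(v)$ (the maximum over the empty set being $0$). *)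

theory Defs
  imports Complex_Main
begin

definition nbr :: "'a set set \<Rightarrow> 'a \<Rightarrow> 'a set" where
  "nbr E u = {x. {u, x} \<in> E \<and> x \<noteq> u}"

definition edge_rel :: "'a set set \<Rightarrow> ('a \<times> 'a) set" where
  "edge_rel E = {(a, b). {a, b} \<in> E \<and> a \<noteq> b}"

definition comp :: "'a set \<Rightarrow> 'a set set \<Rightarrow> 'a \<Rightarrow> 'a set" where
  "comp A E x = {z \<in> A. (x, z) \<in> (edge_rel E \<inter> (A \<times> A))\<^sup>*}"

definition simple_graph :: "'a set \<Rightarrow> 'a set set \<Rightarrow> bool" where
  "simple_graph V E \<longleftrightarrow> finite V \<and> (\<forall>e\<in>E. \<exists>x y. e = {x, y} \<and> x \<noteq> y \<and> x \<in> V \<and> y \<in> V)"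

definition connected_graph :: "'a set \<Rightarrow> 'a set set \<Rightarrow> bool" where
  "connected_graph V E \<longleftrightarrow> simple_graph V E \<and> (\<forall>x\<in>V. \<forall>y\<in>V. y \<in> comp V E x)"

text \<open>State of the DASH process:
  alive = V(G), edges = E(G), heal = E' (healing edges with both endpoints alive),
  cid = current IDs, wt = weights.\<close>
record 'a dash_state =
  alive :: "'a set"
  edges :: "'a set set"
  heal  :: "'a set set"
  cid   :: "'a \<Rightarrow> real"
  wt    :: "'a \<Rightarrow> nat"

definition dash_init :: "'a set \<Rightarrow> 'a set set \<Rightarrow> ('a \<Rightarrow> real) \<Rightarrow> 'a dash_state" where
  "dash_init V0 E0 iid = \<lparr>alive = V0, edges = E0, heal = {}, cid = iid, wt = (\<lambda>_. 1)\<rparr>"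

definition delta :: "'a set set \<Rightarrow> 'a dash_state \<Rightarrow> 'a \<Rightarrow> int" where
  "delta E0 s u = int (card (nbr (edges s) u)) - int (card (nbr E0 u))"

definition UNs :: "('a \<Rightarrow> real) \<Rightarrow> 'a dash_state \<Rightarrow> 'a \<Rightarrow> 'a set" where
  "UNs iid s v = {u \<in> nbr (edges s) v. cid s u \<noteq> cid s v \<and>
      (\<forall>u' \<in> nbr (edges s) v. cid s u' = cid s u \<longrightarrow> iid u \<le> iid u')}"

definition Sset :: "('a \<Rightarrow> real) \<Rightarrow> 'a dash_state \<Rightarrow> 'a \<Rightarrow> 'a set" where
  "Sset iid s v = UNs iid s v \<union> nbr (heal s) v"

text \<open>Edges of the complete binary tree whose positions 1..length L are filled
  (level by level, left to right) by the list L: position p \<ge> 2 is joined to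
  position p div 2. With 0-based list indices, index i > 0 is joined to index
  (i+1) div 2 - 1.\<close>
definition tree_edges :: "'a list \<Rightarrow> 'a set set" where
  "tree_edges L = {{L ! i, L ! ((i + 1) div 2 - 1)} | i. 0 < i \<and> i < length L}"

text \<open>One round: the adversary deletes v (an arbitrary surviving node), S is ordered by
  increasing delta (ties in arbitrary order: any sorted listing L), the tree edges are added,
  the IDs of the component of G' containing S are updated, and the weight of v is moved to
  an arbitrarily chosen node u of N(v,G') (if that set is nonempty).\<close>
definition dash_step :: "'a set set \<Rightarrow> ('a \<Rightarrow> real) \<Rightarrow> 'a dash_state \<Rightarrow> 'a dash_state \<Rightarrow> bool" where
  "dash_step E0 iid s s' \<longleftrightarrow>
    (\<exists>v L. v \<in> alive s \<and>
       distinct L \<and> set L = Sset iid s v \<and> sorted (map (delta E0 s) L) \<and>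
       (let A' = alive s - {v};
            E' = {e \<in> edges s. v \<notin> e} \<union> tree_edges L;
            H' = {e \<in> heal s. v \<notin> e} \<union> tree_edges L;
            S = Sset iid s v;
            C = (\<Union>x\<in>S. comp A' H' x);
            m = Min (cid s ` S)
        in alive s' = A' \<and> edges s' = E' \<and> heal s' = H' \<and>
           cid s' = (\<lambda>x. if x \<in> C then m else cid s x) \<and>
           (if nbr (heal s) v = {} then wt s' = wt s
            else (\<exists>u \<in> nbr (heal s) v. wt s' = (wt s)(u := wt s u + wt s v)))))"

definition dash_reachable :: "'a set \<Rightarrow> 'a set set \<Rightarrow> ('a \<Rightarrow> real) \<Rightarrow> 'a dash_state \<Rightarrow> bool" where
  "dash_reachable V0 E0 iid s \<longleftrightarrow> (dash_step E0 iid)\<^sup>*\<^sup>* (dash_init V0 E0 iid) s"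

definition Tcomp :: "'a dash_state \<Rightarrow> 'a \<Rightarrow> 'a \<Rightarrow> 'a set" where
  "Tcomp s x y = comp (alive s - {y}) (heal s) x"

definition Wt :: "'a dash_state \<Rightarrow> 'a set \<Rightarrow> nat" where
  "Wt s X = (\<Sum>z\<in>X. wt s z)"

definition rem :: "'a dash_state \<Rightarrow> 'a \<Rightarrow> nat" where
  "rem s v = (\<Sum>u\<in>nbr (heal s) v. Wt s (Tcomp s u v))
             - Max (insert 0 ((\<lambda>u. Wt s (Tcomp s u v)) ` nbr (heal s) v)) + wt s v"

end

theory Submission
  imports Defs
begin

text \<open>The healing edges always form a forest on which the current IDs are constant along
edges. Indeed, the tree added when v is deleted joins nodes of S lying in pairwise different
components of G' - v: two G'-neighbours of v are separated by the acyclicity of G', a node of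
UN(v,G) carries an ID different from that of v, hence of v's G'-neighbours, and two nodes of
UN(v,G) have different IDs. Gluing trees onto a forest at vertices of distinct components
keeps it a forest. In a forest the components T(u,v), for the G'-neighbours u \<noteq> q of v, are
pairwise disjoint and, together with v, lie inside T(v,q); since W(T(q,v)) is at most the
maximum in rem(v), this gives W(T(v,q)) \<ge> rem(v).\<close>

section \<open>Graphs given by sets of edges\<close>

definition graph_on :: "'a set \<Rightarrow> 'a set set \<Rightarrow> bool" where
  "graph_on A E \<longleftrightarrow> (\<forall>e\<in>E. \<exists>x y. e = {x, y} \<and> x \<noteq> y \<and> x \<in> A \<and> y \<in> A)"

lemma graph_onE:
  assumes "graph_on A E" and "e \<in> E"
  obtains x y where "e = {x, y}" "x \<noteq> y" "x \<in> A" "y \<in> A"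
  using assms unfolding graph_on_def by meson

lemma graph_on_mono:
  assumes "graph_on A E" and "A \<subseteq> B"
  shows "graph_on B E"
  unfolding graph_on_def
proof
  fix e assume "e \<in> E"
  with assms(1) obtain x y where "e = {x, y}" "x \<noteq> y" "x \<in> A" "y \<in> A" by (rule graph_onE)
  with assms(2) show "\<exists>x y. e = {x, y} \<and> x \<noteq> y \<and> x \<in> B \<and> y \<in> B" by blast
qed

lemma graph_on_Un: "graph_on A E \<Longrightarrow> graph_on A F \<Longrightarrow> graph_on A (E \<union> F)"
  unfolding graph_on_def ball_Un by (rule conjI)

lemma graph_on_delete_vertex:
  assumes "graph_on A E"
  shows "graph_on (A - {v}) {e \<in> E. v \<notin> e}"
  unfolding graph_on_def
proof
  fix e assume "e \<in> {e \<in> E. v \<notin> e}"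
  moreover from this assms obtain x y where "e = {x, y}" "x \<noteq> y" "x \<in> A" "y \<in> A"
    using graph_onE by blast
  ultimately show "\<exists>x y. e = {x, y} \<and> x \<noteq> y \<and> x \<in> A - {v} \<and> y \<in> A - {v}" by blast
qed

lemma edge_rel_iff: "(a, b) \<in> edge_rel E \<longleftrightarrow> {a, b} \<in> E \<and> a \<noteq> b"
  by (simp add: edge_rel_def)

lemma sym_edge_rel: "sym (edge_rel E)"
  by (auto simp: sym_def edge_rel_def insert_commute)

lemma edge_rel_mono: "E \<subseteq> F \<Longrightarrow> edge_rel E \<subseteq> edge_rel F"
  by (auto simp: edge_rel_def)

lemma edge_rel_Un: "edge_rel (E \<union> F) = edge_rel E \<union> edge_rel F"
  by (auto simp: edge_rel_def)

lemma edge_rel_graph_on: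
  assumes "graph_on A E" and "(x, y) \<in> edge_rel E"
  shows "x \<in> A \<and> y \<in> A"
proof -
  from assms obtain a b where "{x, y} = {a, b}" "a \<in> A" "b \<in> A"
    unfolding graph_on_def edge_rel_def by blast
  then show ?thesis by (metis insertCI insertE singletonD)
qed

lemma nbr_iff_edge_rel: "u \<in> nbr E v \<longleftrightarrow> (v, u) \<in> edge_rel E"
  by (auto simp: nbr_def edge_rel_def)

lemma nbr_graph_on: "graph_on A E \<Longrightarrow> nbr E v \<subseteq> A"
  using edge_rel_graph_on unfolding nbr_iff_edge_rel subset_iff by metis

lemma rtrancl_invariant:
  assumes "\<And>a b. (a, b) \<in> R \<Longrightarrow> f a = f b" and "(x, y) \<in> R\<^sup>*"
  shows "f x = f y"
  using assms(2) by induction (auto dest: assms(1))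

lemma sym_edge_rel_restrict: "sym (edge_rel E \<inter> A \<times> A)"
  by (auto simp: sym_def edge_rel_def insert_commute)

lemma comp_subset: "comp A E x \<subseteq> A"
  by (auto simp: comp_def)

lemma comp_self: "x \<in> A \<Longrightarrow> x \<in> comp A E x"
  by (simp add: comp_def)

lemma comp_base:
  assumes "y \<in> comp A E x"
  shows "x \<in> A"
proof -
  from assms have "(x, y) \<in> (edge_rel E \<inter> A \<times> A)\<^sup>*" "y \<in> A" by (simp_all add: comp_def)
  then show ?thesis by (cases rule: converse_rtranclE) auto
qed

lemma comp_sym:
  assumes "y \<in> comp A E x"
  shows "x \<in> comp A E y"
proof -
  from assms have "(x, y) \<in> (edge_rel E \<inter> A \<times> A)\<^sup>*" by (simp add: comp_def)
  then have "(y, x) \<in> (edge_rel E \<inter> A \<times> A)\<^sup>*"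
    by (rule symD[OF sym_rtrancl[OF sym_edge_rel_restrict]])
  with comp_base[OF assms] show ?thesis by (simp add: comp_def)
qed

lemma comp_trans:
  assumes "y \<in> comp A E x"
  shows "comp A E y \<subseteq> comp A E x"
proof
  fix z assume "z \<in> comp A E y"
  with assms have "(x, y) \<in> (edge_rel E \<inter> A \<times> A)\<^sup>*" "(y, z) \<in> (edge_rel E \<inter> A \<times> A)\<^sup>*"
    "z \<in> A" by (simp_all add: comp_def)
  then show "z \<in> comp A E x" by (simp add: comp_def)
qed

lemma comp_mono:
  assumes "A \<subseteq> B"
  shows "comp A E x \<subseteq> comp B E x"
proof
  fix z assume "z \<in> comp A E x"
  then have "(x, z) \<in> (edge_rel E \<inter> A \<times> A)\<^sup>*" "z \<in> A" by (simp_all add: comp_def)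
  moreover have "edge_rel E \<inter> A \<times> A \<subseteq> edge_rel E \<inter> B \<times> B" using assms by auto
  ultimately have "(x, z) \<in> (edge_rel E \<inter> B \<times> B)\<^sup>*" "z \<in> B"
    using assms rtrancl_mono by blast+
  then show "z \<in> comp B E x" by (simp add: comp_def)
qed

lemma comp_edge: "(x, y) \<in> edge_rel E \<Longrightarrow> x \<in> A \<Longrightarrow> y \<in> A \<Longrightarrow> y \<in> comp A E x"
  by (simp add: comp_def r_into_rtrancl)

lemma comp_closed:
  assumes "graph_on A E" and "(y, z) \<in> edge_rel E" and "y \<in> comp A E x"
  shows "z \<in> comp A E x"
proof -
  have "z \<in> comp A E y" using edge_rel_graph_on[OF assms(1,2)] assms(2) by (simp add: comp_edge)
  with comp_trans[OF assms(3)] show ?thesis by (rule subsetD)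
qed

lemma comp_delete_vertex:
  assumes "q \<notin> comp A E x"
  shows "comp A E x \<subseteq> comp (A - {q}) E x"
proof
  fix z assume "z \<in> comp A E x"
  then have "z \<in> A" "z \<noteq> q" "(x, z) \<in> (edge_rel E \<inter> A \<times> A)\<^sup>*"
    using assms by (auto simp: comp_def)
  from this(3) have "(x, z) \<in> (edge_rel E \<inter> (A - {q}) \<times> (A - {q}))\<^sup>*"
  proof (induction rule: rtrancl_induct)
    case (step y z)
    have "(x, z) \<in> (edge_rel E \<inter> A \<times> A)\<^sup>*" using step.hyps by (rule rtrancl_into_rtrancl)
    with step.hyps have "y \<in> comp A E x" "z \<in> comp A E x" by (auto simp: comp_def)
    with assms step.hyps(2) have "(y, z) \<in> edge_rel E \<inter> (A - {q}) \<times> (A - {q})" by auto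
    with step.IH show ?case by (rule rtrancl_into_rtrancl)
  qed simp
  with \<open>z \<in> A\<close> \<open>z \<noteq> q\<close> show "z \<in> comp (A - {q}) E x" by (simp add: comp_def)
qed

section \<open>Forests\<close>

definition forest :: "'a set set \<Rightarrow> bool" where
  "forest H \<longleftrightarrow> (\<forall>a b. {a, b} \<in> H \<longrightarrow> a \<noteq> b \<longrightarrow> (a, b) \<notin> (edge_rel (H - {{a, b}}))\<^sup>*)"

lemma forestD: "forest H \<Longrightarrow> {a, b} \<in> H \<Longrightarrow> a \<noteq> b \<Longrightarrow> (a, b) \<notin> (edge_rel (H - {{a, b}}))\<^sup>*"
  unfolding forest_def by blast

lemma forest_mono:
  assumes "forest H" and "H' \<subseteq> H"
  shows "forest H'"
  unfolding forest_def
proof (intro allI impI notI)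
  fix a b assume "{a, b} \<in> H'" "a \<noteq> b" "(a, b) \<in> (edge_rel (H' - {{a, b}}))\<^sup>*"
  moreover have "edge_rel (H' - {{a, b}}) \<subseteq> edge_rel (H - {{a, b}})"
    using assms(2) by (intro edge_rel_mono) auto
  ultimately have "(a, b) \<in> (edge_rel (H - {{a, b}}))\<^sup>*" using rtrancl_mono by blast
  with forestD[OF assms(1)] \<open>{a, b} \<in> H'\<close> \<open>a \<noteq> b\<close> assms(2) show False by blast
qed

lemma forest_nbrs_disconnected:
  assumes "forest H" and "u \<in> nbr H v" and "u' \<in> nbr H v" and "u \<noteq> u'"
  shows "(u, u') \<notin> (edge_rel {e \<in> H. v \<notin> e})\<^sup>*"
proof
  assume path: "(u, u') \<in> (edge_rel {e \<in> H. v \<notin> e})\<^sup>*"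
  let ?R = "edge_rel (H - {{v, u}})"
  have "{v, u} \<in> H" "v \<noteq> u" using assms(2) by (auto simp: nbr_def)
  have "(v, u') \<in> ?R" using assms(3,4) by (auto simp: nbr_def edge_rel_iff doubleton_eq_iff)
  moreover have "edge_rel {e \<in> H. v \<notin> e} \<subseteq> ?R" by (intro edge_rel_mono) auto
  with path have "(u, u') \<in> ?R\<^sup>*" using rtrancl_mono by blast
  then have "(u', u) \<in> ?R\<^sup>*" by (rule symD[OF sym_rtrancl[OF sym_edge_rel]])
  ultimately have "(v, u) \<in> ?R\<^sup>*" by (rule converse_rtrancl_into_rtrancl)
  with forestD[OF assms(1)] \<open>{v, u} \<in> H\<close> \<open>v \<noteq> u\<close> show False by blast
qed

lemma forest_nbr_comps_disjoint:
  assumes "forest H" and "u \<in> nbr H v" and "u' \<in> nbr H v" and "u \<noteq> u'"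
  shows "comp (A - {v}) H u \<inter> comp (A - {v}) H u' = {}"
proof (rule ccontr)
  assume "comp (A - {v}) H u \<inter> comp (A - {v}) H u' \<noteq> {}"
  then obtain z where "z \<in> comp (A - {v}) H u" "z \<in> comp (A - {v}) H u'" by blast
  then have "u' \<in> comp (A - {v}) H u" using comp_sym comp_trans by (metis subsetD)
  then have "(u, u') \<in> (edge_rel H \<inter> (A - {v}) \<times> (A - {v}))\<^sup>*" by (simp add: comp_def)
  moreover have "edge_rel H \<inter> (A - {v}) \<times> (A - {v}) \<subseteq> edge_rel {e \<in> H. v \<notin> e}"
    by (auto simp: edge_rel_def)
  ultimately have "(u, u') \<in> (edge_rel {e \<in> H. v \<notin> e})\<^sup>*" using rtrancl_mono by blast
  with forest_nbrs_disconnected[OF assms] show False ..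
qed

text \<open>When the vertices of S lie in pairwise different components of R and RT only joins
vertices of S, a path of R \<union> RT can enter and leave an R-component only through the unique
vertex of S in it.\<close>

lemma rtrancl_Un_between_separated:
  assumes "sym R" and RT: "RT \<subseteq> S \<times> S"
    and sep: "\<And>x y. x \<in> S \<Longrightarrow> y \<in> S \<Longrightarrow> (x, y) \<in> R\<^sup>* \<Longrightarrow> x = y"
    and "a \<in> S" and "b \<in> S" and "(a, b) \<in> (R \<union> RT)\<^sup>*"
  shows "(a, b) \<in> RT\<^sup>*"
proof -
  have "\<exists>s\<in>S. (x, s) \<in> R\<^sup>* \<and> (a, s) \<in> RT\<^sup>*" if "(a, x) \<in> (R \<union> RT)\<^sup>*" for x
    using that
  proof (induction rule: rtrancl_induct)
    case base
    with \<open>a \<in> S\<close> show ?case by blast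
  next
    case (step y z)
    then obtain s where s: "s \<in> S" "(y, s) \<in> R\<^sup>*" "(a, s) \<in> RT\<^sup>*" by blast
    from step.hyps(2) show ?case
    proof
      assume "(y, z) \<in> R"
      then have "(z, y) \<in> R" by (rule symD[OF \<open>sym R\<close>])
      with s show ?case by (blast intro: converse_rtrancl_into_rtrancl)
    next
      assume yz: "(y, z) \<in> RT"
      with RT s sep have "y = s" by blast
      with yz RT s show ?case by (blast intro: rtrancl_into_rtrancl)
    qed
  qed
  with assms(5,6) sep show ?thesis by blast
qed

lemma rtrancl_Un_within_separated:
  assumes "sym R" and "R' \<subseteq> R" and RT: "RT \<subseteq> S \<times> S"
    and sep: "\<And>x y. x \<in> S \<Longrightarrow> y \<in> S \<Longrightarrow> (x, y) \<in> R\<^sup>* \<Longrightarrow> x = y"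
    and "(a, b) \<in> R\<^sup>*" and "(a, b) \<in> (R' \<union> RT)\<^sup>*"
  shows "(a, b) \<in> R'\<^sup>*"
proof -
  define K where "K = {z. (a, z) \<in> R\<^sup>*}"
  have sep_K: "x = y" if "x \<in> S \<inter> K" "y \<in> S \<inter> K" for x y
  proof -
    have "(x, a) \<in> R\<^sup>*" using that(1) symD[OF sym_rtrancl[OF \<open>sym R\<close>]] by (auto simp: K_def)
    with that show ?thesis by (auto simp: K_def intro: sep rtrancl_trans)
  qed
  have "(x \<in> K \<longrightarrow> (a, x) \<in> R'\<^sup>*) \<and> (x \<notin> K \<longrightarrow> (\<exists>s\<in>S \<inter> K. (a, s) \<in> R'\<^sup>*))"
    if "(a, x) \<in> (R' \<union> RT)\<^sup>*" for x
    using that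
  proof (induction rule: rtrancl_induct)
    case (step y z)
    from step.hyps(2) show ?case
    proof
      assume yz: "(y, z) \<in> R'"
      then have "(y, z) \<in> R" "(z, y) \<in> R" using assms(1,2) by (auto dest: symD)
      then have "y \<in> K \<longleftrightarrow> z \<in> K" by (auto simp: K_def intro: rtrancl_into_rtrancl)
      with step.IH yz show ?case by (auto intro: rtrancl_into_rtrancl)
    next
      assume "(y, z) \<in> RT"
      then have "y \<in> S" "z \<in> S" using RT by auto
      with step.IH sep_K show ?case by blast
    qed
  qed (simp add: K_def)
  from this[OF assms(6)] assms(5) show ?thesis by (simp add: K_def)
qed

lemma edge_rel_subset_graph_on: "graph_on S T \<Longrightarrow> edge_rel T \<subseteq> S \<times> S"
  by (auto dest: edge_rel_graph_on)

lemma forest_glue: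
  assumes "forest H" and "forest T" and "graph_on S T"
    and sep: "\<And>x y. x \<in> S \<Longrightarrow> y \<in> S \<Longrightarrow> (x, y) \<in> (edge_rel H)\<^sup>* \<Longrightarrow> x = y"
  shows "forest (H \<union> T)"
  unfolding forest_def
proof (intro allI impI notI)
  fix a b assume e: "{a, b} \<in> H \<union> T" "a \<noteq> b"
    and path: "(a, b) \<in> (edge_rel (H \<union> T - {{a, b}}))\<^sup>*"
  have split: "edge_rel (H \<union> T - {{a, b}}) = edge_rel (H - {{a, b}}) \<union> edge_rel (T - {{a, b}})"
    by (simp add: Un_Diff edge_rel_Un)
  show False
  proof (cases "{a, b} \<in> T")
    case True
    with e(2) have "(a, b) \<in> edge_rel T" by (simp add: edge_rel_iff)
    with assms(3) have "a \<in> S" "b \<in> S" by (simp_all add: edge_rel_graph_on)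
    have "graph_on S (T - {{a, b}})" using assms(3) unfolding graph_on_def by simp
    then have RT: "edge_rel (T - {{a, b}}) \<subseteq> S \<times> S" by (rule edge_rel_subset_graph_on)
    have "edge_rel (H \<union> T - {{a, b}}) \<subseteq> edge_rel H \<union> edge_rel (T - {{a, b}})"
      unfolding split using edge_rel_mono[OF Diff_subset] by (rule Un_mono[OF _ order_refl])
    from rtrancl_mono[OF this] path have "(a, b) \<in> (edge_rel H \<union> edge_rel (T - {{a, b}}))\<^sup>*"
      by (rule subsetD)
    with sym_edge_rel RT sep \<open>a \<in> S\<close> \<open>b \<in> S\<close>
    have "(a, b) \<in> (edge_rel (T - {{a, b}}))\<^sup>*" by (rule rtrancl_Un_between_separated)
    with forestD[OF assms(2) True e(2)] show False ..
  next
    case False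
    with e have "{a, b} \<in> H" by simp
    with e(2) have in_H: "(a, b) \<in> (edge_rel H)\<^sup>*" by (simp add: edge_rel_iff r_into_rtrancl)
    have "T - {{a, b}} = T" using False by simp
    with path have "(a, b) \<in> (edge_rel (H - {{a, b}}) \<union> edge_rel T)\<^sup>*" by (simp only: split)
    with sym_edge_rel edge_rel_mono[OF Diff_subset] edge_rel_subset_graph_on[OF assms(3)] sep in_H
    have "(a, b) \<in> (edge_rel (H - {{a, b}}))\<^sup>*" by (rule rtrancl_Un_within_separated)
    with forestD[OF assms(1) \<open>{a, b} \<in> H\<close> e(2)] show False ..
  qed
qed

definition tree_parent :: "nat \<Rightarrow> nat" where
  "tree_parent j = (j + 1) div 2 - 1"

lemma tree_parent_le: "tree_parent j \<le> j"
  by (simp add: tree_parent_def)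

lemma tree_parent_less: "0 < j \<Longrightarrow> tree_parent j < j"
  by (simp add: tree_parent_def)

lemma funpow_tree_parent_le: "(tree_parent ^^ k) j \<le> j"
  by (induction k) (auto intro: order_trans[OF tree_parent_le])

lemma tree_edges_parent: "tree_edges L = {{L ! i, L ! tree_parent i} | i. 0 < i \<and> i < length L}"
  by (simp add: tree_edges_def tree_parent_def)

lemma tree_edgeE:
  assumes "e \<in> tree_edges L"
  obtains i where "0 < i" "i < length L" "tree_parent i < length L"
    "e = {L ! i, L ! tree_parent i}"
proof -
  from assms obtain i where "0 < i" "i < length L" "e = {L ! i, L ! tree_parent i}"
    unfolding tree_edges_parent by auto
  moreover from this(2) have "tree_parent i < length L" by (rule le_less_trans[OF tree_parent_le])
  ultimately show ?thesis by (meson that)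
qed

lemma graph_on_tree_edges:
  assumes "distinct L"
  shows "graph_on (set L) (tree_edges L)"
  unfolding graph_on_def
proof
  fix e assume "e \<in> tree_edges L"
  then obtain i where i: "0 < i" "i < length L" "tree_parent i < length L"
    "e = {L ! i, L ! tree_parent i}" by (rule tree_edgeE)
  then have "L ! i \<noteq> L ! tree_parent i"
    using assms tree_parent_less[OF i(1)] by (simp add: nth_eq_iff_index_eq)
  moreover have "L ! i \<in> set L" "L ! tree_parent i \<in> set L" using i(2,3) by simp_all
  ultimately show "\<exists>x y. e = {x, y} \<and> x \<noteq> y \<and> x \<in> set L \<and> y \<in> set L"
    using i(4) by blast
qed

lemma tree_edges_reachable_subtree:
  assumes "distinct L" and "i < length L"
    and "(L ! i, x) \<in> (edge_rel (tree_edges L - {{L ! i, L ! tree_parent i}}))\<^sup>*"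
  shows "\<exists>j<length L. x = L ! j \<and> (\<exists>k. (tree_parent ^^ k) j = i)"
  using assms(3)
proof (induction rule: rtrancl_induct)
  case base
  with assms(2) show ?case by (metis funpow_0)
next
  case (step y z)
  then obtain j k where j: "j < length L" "y = L ! j" "(tree_parent ^^ k) j = i" by blast
  from step.hyps(2) have "{y, z} \<in> tree_edges L" "{y, z} \<noteq> {L ! i, L ! tree_parent i}" "y \<noteq> z"
    by (auto simp: edge_rel_iff)
  then obtain j' where j': "0 < j'" "j' < length L" "tree_parent j' < length L"
    "{y, z} = {L ! j', L ! tree_parent j'}" by (elim tree_edgeE)
  with \<open>{y, z} \<noteq> {L ! i, L ! tree_parent i}\<close> have "j' \<noteq> i" by auto
  from j'(4) \<open>y \<noteq> z\<close> consider "y = L ! j'" "z = L ! tree_parent j'"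
    | "y = L ! tree_parent j'" "z = L ! j'" by (auto simp: doubleton_eq_iff)
  then show ?case
  proof cases
    case 1
    with j j' assms(1) have "j = j'" by (simp add: nth_eq_iff_index_eq)
    with j(3) \<open>j' \<noteq> i\<close> obtain k' where "k = Suc k'" by (cases k) auto
    with j(3) \<open>j = j'\<close> have "(tree_parent ^^ k') (tree_parent j') = i"
      by (simp add: funpow_Suc_right del: funpow.simps)
    with 1 j'(3) show ?thesis by blast
  next
    case 2
    with j j' assms(1) have "j = tree_parent j'" by (simp add: nth_eq_iff_index_eq)
    with j(3) have "(tree_parent ^^ Suc k) j' = i"
      by (simp add: funpow_Suc_right del: funpow.simps)
    with 2 j'(2) show ?thesis by blast
  qed
qed

lemma forest_tree_edges:
  assumes "distinct L"
  shows "forest (tree_edges L)"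
  unfolding forest_def
proof (intro allI impI notI)
  fix a b assume "{a, b} \<in> tree_edges L" "a \<noteq> b"
    and path: "(a, b) \<in> (edge_rel (tree_edges L - {{a, b}}))\<^sup>*"
  then obtain i where i: "0 < i" "i < length L" "tree_parent i < length L"
    "{a, b} = {L ! i, L ! tree_parent i}" by (elim tree_edgeE)
  let ?R = "edge_rel (tree_edges L - {{L ! i, L ! tree_parent i}})"
  from i(4) have "a = L ! i \<and> b = L ! tree_parent i \<or> a = L ! tree_parent i \<and> b = L ! i"
    by (auto simp: doubleton_eq_iff)
  moreover from path have "(a, b) \<in> ?R\<^sup>*" by (simp add: i(4))
  moreover from this have "(b, a) \<in> ?R\<^sup>*" by (rule symD[OF sym_rtrancl[OF sym_edge_rel]])
  ultimately have "(L ! i, L ! tree_parent i) \<in> ?R\<^sup>*" by (elim disjE) simp_all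
  from tree_edges_reachable_subtree[OF assms i(2) this] obtain j k where
    "j < length L" "L ! tree_parent i = L ! j" "(tree_parent ^^ k) j = i" by blast
  with assms i(3) have "(tree_parent ^^ k) (tree_parent i) = i" by (simp add: nth_eq_iff_index_eq)
  with funpow_tree_parent_le[of k "tree_parent i"] tree_parent_less[OF i(1)] show False by simp
qed

section \<open>The invariant of DASH\<close>

definition dash_inv :: "'a set \<Rightarrow> 'a dash_state \<Rightarrow> bool" where
  "dash_inv V0 s \<longleftrightarrow> alive s \<subseteq> V0 \<and> graph_on (alive s) (edges s) \<and>
     graph_on (alive s) (heal s) \<and> forest (heal s) \<and>
     (\<forall>x y. (x, y) \<in> edge_rel (heal s) \<longrightarrow> cid s x = cid s y)"

lemma dash_invD:
  assumes "dash_inv V0 s"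
  shows "alive s \<subseteq> V0" "graph_on (alive s) (edges s)" "graph_on (alive s) (heal s)"
    "forest (heal s)" "(x, y) \<in> edge_rel (heal s) \<Longrightarrow> cid s x = cid s y"
  using assms unfolding dash_inv_def by blast+

lemma simple_graph_iff: "simple_graph V E \<longleftrightarrow> finite V \<and> graph_on V E"
  by (simp add: simple_graph_def graph_on_def)

lemma dash_inv_init: "simple_graph V0 E0 \<Longrightarrow> dash_inv V0 (dash_init V0 E0 iid)"
  by (simp add: dash_inv_def dash_init_def simple_graph_iff graph_on_def forest_def edge_rel_def)

lemma dash_inv_cid_rtrancl:
  "dash_inv V0 s \<Longrightarrow> (x, y) \<in> (edge_rel (heal s))\<^sup>* \<Longrightarrow> cid s x = cid s y"
  by (rule rtrancl_invariant[OF dash_invD(5)])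

lemma UNs_unique:
  assumes "inj_on iid V0" and "x \<in> UNs iid s v" "y \<in> UNs iid s v" and "x \<in> V0" "y \<in> V0"
    and "cid s x = cid s y"
  shows "x = y"
proof -
  from assms(2,3,6) have "iid x = iid y" unfolding UNs_def by (auto intro: antisym)
  from inj_onD[OF assms(1) this assms(4,5)] show ?thesis .
qed

lemma Sset_subset:
  assumes "dash_inv V0 s"
  shows "Sset iid s v \<subseteq> alive s - {v}"
proof -
  have "nbr (edges s) v \<subseteq> alive s" "nbr (heal s) v \<subseteq> alive s"
    using dash_invD(2,3)[OF assms] by (simp_all add: nbr_graph_on)
  then show ?thesis unfolding Sset_def UNs_def by (auto simp: nbr_def)
qed

lemma Sset_separated:
  assumes inj: "inj_on iid V0" and inv: "dash_inv V0 s"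
    and "x \<in> Sset iid s v" "y \<in> Sset iid s v" and path: "(x, y) \<in> (edge_rel {e \<in> heal s. v \<notin> e})\<^sup>*"
  shows "x = y"
proof -
  have S_V0: "Sset iid s v \<subseteq> V0" using Sset_subset[OF inv] dash_invD(1)[OF inv] by blast
  have "{e \<in> heal s. v \<notin> e} \<subseteq> heal s" by blast
  from rtrancl_mono[OF edge_rel_mono[OF this]] path have "(x, y) \<in> (edge_rel (heal s))\<^sup>*"
    by (rule subsetD)
  with inv have cid_xy: "cid s x = cid s y" by (rule dash_inv_cid_rtrancl)
  have UN: "x' = y'" if "x' \<in> UNs iid s v" "y' \<in> Sset iid s v" "cid s x' = cid s y'" for x' y'
  proof (cases "y' \<in> UNs iid s v")
    case True
    have "x' \<in> V0" "y' \<in> V0" using that(1,2) S_V0 unfolding Sset_def by auto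
    from UNs_unique[OF inj that(1) True this that(3)] show ?thesis .
  next
    case False
    with that(2) have "(v, y') \<in> edge_rel (heal s)" by (simp add: Sset_def nbr_iff_edge_rel)
    with inv have "cid s v = cid s y'" by (rule dash_invD(5))
    with that(1,3) show ?thesis by (simp add: UNs_def)
  qed
  consider "x \<in> UNs iid s v" | "y \<in> UNs iid s v" | "x \<in> nbr (heal s) v" "y \<in> nbr (heal s) v"
    using assms(3,4) by (auto simp: Sset_def)
  then show ?thesis
  proof cases
    case 1
    from UN[OF 1 assms(4) cid_xy] show ?thesis .
  next
    case 2
    from UN[OF 2 assms(3) cid_xy[symmetric]] show ?thesis by (rule sym)
  next
    case 3
    with forest_nbrs_disconnected[OF dash_invD(4)[OF inv]] path show ?thesis by blast
  qed
qed

lemma dash_stepE: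
  assumes "dash_step E0 iid s s'"
  obtains v L where "distinct L" "set L = Sset iid s v"
    "alive s' = alive s - {v}"
    "edges s' = {e \<in> edges s. v \<notin> e} \<union> tree_edges L"
    "heal s' = {e \<in> heal s. v \<notin> e} \<union> tree_edges L"
    "cid s' = (\<lambda>x. if x \<in> (\<Union>y\<in>Sset iid s v. comp (alive s - {v}) (heal s') y)
                    then Min (cid s ` Sset iid s v) else cid s x)"
  using assms unfolding dash_step_def Let_def by (elim exE conjE) (rule that; assumption?; simp)

lemma relabel_components_edge:
  assumes graph: "graph_on A (H0 \<union> T)" and "graph_on S T" and "S \<subseteq> A"
    and f: "\<And>y z. (y, z) \<in> edge_rel H0 \<Longrightarrow> f y = f z"
    and edge: "(x, y) \<in> edge_rel (H0 \<union> T)"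
  defines "C \<equiv> \<Union>w\<in>S. comp A (H0 \<union> T) w"
  shows "(if x \<in> C then m else f x) = (if y \<in> C then m else f y)"
proof -
  have closed: "z \<in> C" if "(y, z) \<in> edge_rel (H0 \<union> T)" "y \<in> C" for y z
    using that comp_closed[OF graph] unfolding C_def by blast
  have "(y, x) \<in> edge_rel (H0 \<union> T)" using edge by (rule symD[OF sym_edge_rel])
  with edge closed have C_iff: "x \<in> C \<longleftrightarrow> y \<in> C" by blast
  have "S \<subseteq> C"
  proof
    fix w assume "w \<in> S"
    with \<open>S \<subseteq> A\<close> have "w \<in> comp A (H0 \<union> T) w" by (simp add: comp_self subsetD)
    with \<open>w \<in> S\<close> show "w \<in> C" unfolding C_def by blast
  qed
  show ?thesis
  proof (cases "x \<in> C")
    case False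
    with \<open>S \<subseteq> C\<close> \<open>graph_on S T\<close> have "(x, y) \<notin> edge_rel T" by (auto dest: edge_rel_graph_on)
    with edge have "(x, y) \<in> edge_rel H0" by (simp add: edge_rel_Un)
    with False C_iff show ?thesis by (simp add: f)
  qed (simp add: C_iff)
qed

lemma dash_step_inv:
  assumes inj: "inj_on iid V0" and inv: "dash_inv V0 s" and "dash_step E0 iid s s'"
  shows "dash_inv V0 s'"
proof -
  obtain v L where L: "distinct L" "set L = Sset iid s v"
    and alive': "alive s' = alive s - {v}"
    and edges': "edges s' = {e \<in> edges s. v \<notin> e} \<union> tree_edges L"
    and heal': "heal s' = {e \<in> heal s. v \<notin> e} \<union> tree_edges L"
    and cid': "cid s' = (\<lambda>x. if x \<in> (\<Union>y\<in>Sset iid s v. comp (alive s - {v}) (heal s') y)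
                               then Min (cid s ` Sset iid s v) else cid s x)"
    using assms(3) by (rule dash_stepE)
  define S where "S = Sset iid s v"
  have S_alive: "S \<subseteq> alive s'" using Sset_subset[OF inv] unfolding S_def alive' .
  have graph_T: "graph_on S (tree_edges L)" using graph_on_tree_edges[OF L(1)] unfolding L(2) S_def .
  have graph_heal': "graph_on (alive s') (heal s')"
    unfolding heal' alive' using graph_on_delete_vertex[OF dash_invD(3)[OF inv]]
      graph_on_mono[OF graph_T S_alive[unfolded alive']] by (rule graph_on_Un)
  have "graph_on (alive s') (edges s')"
    unfolding edges' alive' using graph_on_delete_vertex[OF dash_invD(2)[OF inv]]
      graph_on_mono[OF graph_T S_alive[unfolded alive']] by (rule graph_on_Un)
  moreover have "forest (heal s')"
    unfolding heal'
  proof (rule forest_glue[OF _ forest_tree_edges[OF L(1)] graph_T])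
    show "forest {e \<in> heal s. v \<notin> e}" by (rule forest_mono[OF dash_invD(4)[OF inv]]) blast
    show "x = y" if "x \<in> S" "y \<in> S" "(x, y) \<in> (edge_rel {e \<in> heal s. v \<notin> e})\<^sup>*" for x y
      using that unfolding S_def by (rule Sset_separated[OF inj inv])
  qed
  moreover have "cid s' x = cid s' y" if "(x, y) \<in> edge_rel (heal s')" for x y
  proof -
    have cid_H0: "cid s y = cid s z" if "(y, z) \<in> edge_rel {e \<in> heal s. v \<notin> e}" for y z
      using that edge_rel_mono[of "{e \<in> heal s. v \<notin> e}" "heal s"] dash_invD(5)[OF inv] by blast
    from relabel_components_edge[where f = "cid s", OF graph_heal'[unfolded heal' alive']
        graph_T S_alive[unfolded alive'] cid_H0 that[unfolded heal']]
    show ?thesis unfolding cid' heal' S_def by simp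
  qed
  moreover have "alive s' \<subseteq> V0" using dash_invD(1)[OF inv] unfolding alive' by blast
  ultimately show ?thesis using graph_heal' unfolding dash_inv_def by blast
qed

lemma dash_reachable_inv:
  assumes "simple_graph V0 E0" and "inj_on iid V0" and "dash_reachable V0 E0 iid s"
  shows "dash_inv V0 s"
  using assms(3) unfolding dash_reachable_def
proof (induction rule: rtranclp_induct)
  case base
  from assms(1) show ?case by (rule dash_inv_init)
next
  case (step s s')
  with assms(2) show ?case by (blast intro: dash_step_inv)
qed

section \<open>Subtrees hanging off a node of a forest\<close>

lemma forest_nbr_comp_subset:
  assumes "forest H" and "graph_on A H" and "v \<in> A"
    and "q \<in> nbr H v" and "u \<in> nbr H v" and "u \<noteq> q"
  shows "comp (A - {v}) H u \<subseteq> comp (A - {q}) H v"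
proof -
  have "q \<in> A - {v}" "u \<in> A - {q}"
    using assms(2,4,5,6) nbr_graph_on by (fastforce simp: nbr_def)+
  from this(1) have "q \<in> comp (A - {v}) H q" by (rule comp_self)
  with forest_nbr_comps_disjoint[OF assms(1,5,4,6)] have "q \<notin> comp (A - {v}) H u" by blast
  then have "comp (A - {v}) H u \<subseteq> comp (A - {v} - {q}) H u" by (rule comp_delete_vertex)
  also have "\<dots> \<subseteq> comp (A - {q}) H u" by (rule comp_mono) blast
  also have "\<dots> \<subseteq> comp (A - {q}) H v"
  proof (rule comp_trans, rule comp_edge)
    show "(v, u) \<in> edge_rel H" using assms(5) by (simp add: nbr_iff_edge_rel)
    show "v \<in> A - {q}" using assms(3,4) by (auto simp: nbr_def)
  qed fact
  finally show ?thesis .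
qed

lemma Wt_nbr_Tcomps_le:
  assumes "finite (alive s)" and "graph_on (alive s) (heal s)" and "forest (heal s)"
    and "v \<in> alive s" and "q \<in> nbr (heal s) v"
  shows "wt s v + (\<Sum>u\<in>nbr (heal s) v - {q}. Wt s (Tcomp s u v)) \<le> Wt s (Tcomp s v q)"
proof -
  let ?N = "nbr (heal s) v - {q}"
  have "?N \<subseteq> alive s" using nbr_graph_on[OF assms(2)] by blast
  with assms(1) have fin_N: "finite ?N" by (rule finite_subset[rotated])
  have fin_T: "finite (Tcomp s x y)" for x y
    unfolding Tcomp_def by (rule finite_subset[OF comp_subset]) (simp add: assms(1))
  have disj: "\<forall>i\<in>?N. \<forall>j\<in>?N. i \<noteq> j \<longrightarrow> Tcomp s i v \<inter> Tcomp s j v = {}"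
    using forest_nbr_comps_disjoint[OF assms(3)] unfolding Tcomp_def by blast
  have v_notin: "v \<notin> (\<Union>u\<in>?N. Tcomp s u v)"
    using comp_subset[of "alive s - {v}" "heal s"] unfolding Tcomp_def by blast
  have "wt s v + (\<Sum>u\<in>?N. Wt s (Tcomp s u v)) = wt s v + Wt s (\<Union>u\<in>?N. Tcomp s u v)"
    unfolding Wt_def using fin_T by (subst sum.UNION_disjoint[OF fin_N _ disj]) simp_all
  also have "\<dots> = Wt s (insert v (\<Union>u\<in>?N. Tcomp s u v))"
    unfolding Wt_def using fin_N fin_T v_notin by simp
  also have "\<dots> \<le> Wt s (Tcomp s v q)"
  proof -
    have "v \<in> alive s - {q}" using assms(4,5) by (auto simp: nbr_def)
    then have "v \<in> Tcomp s v q" unfolding Tcomp_def by (rule comp_self)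
    moreover have "Tcomp s u v \<subseteq> Tcomp s v q" if "u \<in> ?N" for u
      using forest_nbr_comp_subset[OF assms(3,2,4,5)] that unfolding Tcomp_def by blast
    ultimately show ?thesis unfolding Wt_def by (intro sum_mono2 fin_T) auto
  qed
  finally show ?thesis .
qed

theorem lemma3:
  fixes V0 :: "'a set" and E0 :: "'a set set" and iid :: "'a \<Rightarrow> real"
    and s :: "'a dash_state" and v q :: 'a
  assumes "connected_graph V0 E0"
    and "inj_on iid V0" and "\<forall>x\<in>V0. 0 \<le> iid x \<and> iid x \<le> 1"
    and "dash_reachable V0 E0 iid s"
    and "v \<in> alive s" and "q \<in> nbr (heal s) v"
  shows "Wt s (Tcomp s v q) \<ge> rem s v"
proof -
  have simple: "simple_graph V0 E0" using assms(1) by (simp add: connected_graph_def)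
  from simple assms(2,4) have inv: "dash_inv V0 s" by (rule dash_reachable_inv)
  have fin: "finite (alive s)"
    using dash_invD(1)[OF inv] simple finite_subset by (auto simp: simple_graph_def)
  define f where "f u = Wt s (Tcomp s u v)" for u
  let ?N = "nbr (heal s) v"
  have "finite ?N" using fin nbr_graph_on[OF dash_invD(3)[OF inv]] finite_subset by blast
  from this assms(6) have "(\<Sum>u\<in>?N. f u) = f q + (\<Sum>u\<in>?N - {q}. f u)" by (rule sum.remove)
  moreover have "f q \<le> Max (insert 0 (f ` ?N))" using \<open>finite ?N\<close> assms(6) by (intro Max_ge) auto
  moreover have "wt s v + (\<Sum>u\<in>?N - {q}. f u) \<le> Wt s (Tcomp s v q)"
    unfolding f_def using fin dash_invD(3,4)[OF inv] assms(5,6) by (rule Wt_nbr_Tcomps_le)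
  ultimately show ?thesis unfolding rem_def f_def[symmetric] by linarith
qed

end
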